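(* Let $d\ge 2$ and let $\rho$ be a diagonal symmetric state on $\mathbb{C}^d\otimes\mathbb{C}^d$ that is PPT (i.e. $\rho^{T_B}\succeq 0$), and suppose its associated matrix $M(\rho)$ has rank at most $2$. Then $\rho$ is separable.
   Context: Let $\{\ket{0},\dots,\ket{d-1}\}$ be the computational basis of $\mathbb{C}^d$. Define $\ket{D_{ii}}=\ket{ii}$ and, for $i<j$, $\ket{D_{ij}}=(\ket{ij}+\ket{ji})/\sqrt{2}$. A state $\rho$ on $\mathbb{C}^d\otimes\mathbb{C}^d$ is diagonal symmetric (DS) if $\rho=\sum_{0\le i\le j<d}p_{ij}\ket{D_{ij}}\bra{D_{ij}}$ with $p_{ij}\ge 0$ and $\sum_{i\le j}p_{ij}=1$; set $p_{ji}=p_{ij}$. Its associated matrix $M(\rho)$ is the real symmetric $d\times d$ matrix with $M(\rho)_{ii}=p_{ii}$ and $M(\rho)_{ij}=p_{ij}/2$ for $i\ne j$. A state is separable if it is a convex combination of product states $\rho^A\otimes\rho^B$. The partial transpose $\rho^{T_B}$ is taken with respect to the computational basis of the second factor. *)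

theory Defs
  imports "HOL-Analysis.Analysis"
begin

definition ket :: "'a::finite \<Rightarrow> complex^'a" where
  "ket i = axis i 1"

definition proj :: "complex^'a \<Rightarrow> complex^'a^'a" where
  "proj v = (\<chi> a b. v $ a * cnj (v $ b))"

definition Dket :: "'n::finite \<Rightarrow> 'n \<Rightarrow> complex^('n \<times> 'n)" where
  "Dket i j = (if i = j then ket (i, i)
               else (1 / sqrt 2) *\<^sub>R (ket (i, j) + ket (j, i)))"

definition ds_state :: "('n::{finite,linorder} \<Rightarrow> 'n \<Rightarrow> real) \<Rightarrow> complex^('n\<times>'n)^('n\<times>'n)" where
  "ds_state p = (\<Sum>(i,j) \<in> {(i,j). i \<le> j}. p i j *\<^sub>R proj (Dket i j))"

definition assoc_matrix :: "('n::finite \<Rightarrow> 'n \<Rightarrow> real) \<Rightarrow> real^'n^'n" where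
  "assoc_matrix p = (\<chi> i j. if i = j then p i i else p i j / 2)"

definition mtrace :: "complex^'a^'a \<Rightarrow> complex" where
  "mtrace A = (\<Sum>i\<in>UNIV. A $ i $ i)"

text \<open>Positive semidefinite (over C, this includes hermiticity).\<close>
definition psd :: "complex^'a^'a \<Rightarrow> bool" where
  "psd A \<longleftrightarrow> (\<forall>x::complex^'a. (\<Sum>i\<in>UNIV. \<Sum>j\<in>UNIV. cnj (x $ i) * A $ i $ j * x $ j) \<in> \<real>
                 \<and> 0 \<le> Re (\<Sum>i\<in>UNIV. \<Sum>j\<in>UNIV. cnj (x $ i) * A $ i $ j * x $ j))"

definition density :: "complex^'a^'a \<Rightarrow> bool" where
  "density A \<longleftrightarrow> psd A \<and> mtrace A = 1"

definition kron :: "complex^'a^'a \<Rightarrow> complex^'b^'b \<Rightarrow> complex^('a::finite\<times>'b::finite)^('a\<times>'b)" where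
  "kron A B = (\<chi> r c. A $ fst r $ fst c * B $ snd r $ snd c)"

definition ptransB :: "complex^('a::finite\<times>'b::finite)^('a\<times>'b) \<Rightarrow> complex^('a\<times>'b)^('a\<times>'b)" where
  "ptransB R = (\<chi> r c. R $ (fst r, snd c) $ (fst c, snd r))"

definition PPT :: "complex^('a::finite\<times>'b::finite)^('a\<times>'b) \<Rightarrow> bool" where
  "PPT R \<longleftrightarrow> psd (ptransB R)"

definition separable :: "complex^('a::finite\<times>'b::finite)^('a\<times>'b) \<Rightarrow> bool" where
  "separable R \<longleftrightarrow> (\<exists>(m::nat) (w::nat \<Rightarrow> real) (A::nat \<Rightarrow> complex^'a^'a) (B::nat \<Rightarrow> complex^'b^'b).
     (\<forall>k<m. 0 \<le> w k \<and> density (A k) \<and> density (B k)) \<and> (\<Sum>k<m. w k) = 1 \<and>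
     R = (\<Sum>k<m. w k *\<^sub>R kron (A k) (B k)))"

end

theory Submission
  imports Defs
begin

(* PPT makes the associated matrix M positive semidefinite, since the partial transpose of rho
   restricted to the span of the kets |ii> is M; and M is entrywise nonnegative. A nonnegative
   positive semidefinite matrix of rank at most 2 factors as M = a a^T + b b^T with a, b >= 0:
   every row is a nonnegative combination of the two rows enclosing the widest angle. Hence
   rho = D(a) + D(b), where D(w) is the diagonal symmetric operator with associated matrix w w^T.
   Each D(w) is separable: if g labels the basis so that g x + g y determines {x, y} (g x a power
   of 3), then averaging |psi_t><psi_t| (x) |psi_t><psi_t| with
   psi_t = sum_x sqrt(w x) exp(2 pi sqrt(-1) t g(x) / N) |x> over t < N kills exactly the
   entries of the product that D(w) does not have. *)

lemma rank_le_2_row_combination: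
  fixes M :: "real^'n^'m"
  assumes rank: "rank M \<le> 2"
    and indep: "\<And>u v. u *\<^sub>R M$k + v *\<^sub>R M$l = 0 \<Longrightarrow> u = 0 \<and> v = 0"
  shows "\<exists>x y. M$i = x *\<^sub>R M$k + y *\<^sub>R M$l"
proof (rule ccontr)
  assume no_comb: "\<not> ?thesis"
  have "M$k \<noteq> M$l"
    using indep[of 1 "-1"] by auto
  have "M$l \<noteq> 0"
    using indep[of 0 1] by auto
  have "M$k \<notin> span {M$l}"
  proof
    assume "M$k \<in> span {M$l}"
    then obtain c where "M$k = c *\<^sub>R M$l"
      by (auto simp: span_singleton)
    with indep[of 1 "- c"] show False by simp
  qed
  moreover have "independent {M$l}"
    using \<open>M$l \<noteq> 0\<close> by simp
  ultimately have indep2: "independent {M$k, M$l}"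
    by (rule independent_insertI)
  have not_span: "M$i \<notin> span {M$k, M$l}"
  proof
    assume "M$i \<in> span {M$k, M$l}"
    then obtain x y where "M$i - x *\<^sub>R M$k = y *\<^sub>R M$l"
      by (auto simp: span_breakdown_eq span_singleton)
    then have "M$i = x *\<^sub>R M$k + y *\<^sub>R M$l"
      by (simp add: algebra_simps)
    with no_comb show False by blast
  qed
  have "M$k \<in> span {M$k, M$l}" "M$l \<in> span {M$k, M$l}"
    by (simp_all add: span_base)
  with not_span have distinct: "M$i \<notin> {M$k, M$l}"
    by auto
  from not_span have "independent {M$i, M$k, M$l}"
    using indep2 by (rule independent_insertI)
  moreover have "M$j \<in> rows M" for j
    unfolding rows_def row_def vec_lambda_eta by blast
  then have "{M$i, M$k, M$l} \<subseteq> rows M"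
    by simp
  ultimately have "card {M$i, M$k, M$l} \<le> dim (rows M)"
    by (intro independent_card_le_dim)
  also have "\<dots> \<le> 2"
    using rank by (simp add: row_rank_def)
  finally have "card {M$i, M$k, M$l} \<le> 2" .
  moreover have "card {M$i, M$k, M$l} = 3"
    using distinct \<open>M$k \<noteq> M$l\<close> by simp
  ultimately show False by simp
qed

lemma row_pair_independent_if_minor_nonzero:
  fixes M :: "real^'n^'n"
  assumes minor: "M$k$k * M$l$l - M$k$l * M$l$k \<noteq> 0"
    and comb: "u *\<^sub>R M$k + v *\<^sub>R M$l = 0"
  shows "u = 0 \<and> v = 0"
proof -
  have k: "u * M$k$k + v * M$l$k = 0" and l: "u * M$k$l + v * M$l$l = 0"
    using arg_cong[OF comb, of "\<lambda>z. z$k"] arg_cong[OF comb, of "\<lambda>z. z$l"] by simp_all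
  have "u * (M$k$k * M$l$l - M$k$l * M$l$k) = M$l$l * (u * M$k$k + v * M$l$k) - M$l$k * (u * M$k$l + v * M$l$l)"
    and "v * (M$k$k * M$l$l - M$k$l * M$l$k) = M$k$k * (u * M$k$l + v * M$l$l) - M$k$l * (u * M$k$k + v * M$l$k)"
    by (simp_all add: algebra_simps)
  with k l have "u * (M$k$k * M$l$l - M$k$l * M$l$k) = 0" "v * (M$k$k * M$l$l - M$k$l * M$l$k) = 0"
    by simp_all
  with minor show ?thesis by simp
qed

lemma rank2_gram_factorization:
  fixes M :: "'n \<Rightarrow> 'n \<Rightarrow> real"
  assumes sym: "\<And>i j. M i j = M j i"
    and pos: "M k k > 0" and minor: "M k k * M l l - (M k l)^2 > 0" and nonneg: "M k l \<ge> 0"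
    and comb: "\<And>i j. M i j = \<alpha> i * M k j + \<beta> i * M l j"
    and coeffs_nonneg: "\<And>i. \<alpha> i \<ge> 0 \<and> \<beta> i \<ge> 0"
  shows "\<exists>a b. (\<forall>i. a i \<ge> 0 \<and> b i \<ge> 0) \<and> (\<forall>i j. M i j = a i * a j + b i * b j)"
proof -
  define A B C where "A = M k k" and "B = M l l" and "C = M k l"
  define s t where "s = sqrt A" and "t = sqrt ((A*B - C^2)/A)"
  have s: "s * s = A" "s > 0" and t: "t * t = (A*B - C^2)/A" "t \<ge> 0"
    using pos minor by (simp_all add: s_def t_def A_def B_def C_def)
  define a where "a i = \<alpha> i * s + \<beta> i * C / s" for i
  define b where "b i = \<beta> i * t" for i
  have "M i j = a i * a j + b i * b j" for i j
  proof -
    have "M i j = \<alpha> i * M j k + \<beta> i * M j l"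
      using comb[of i j] sym[of k j] sym[of l j] by simp
    also have "\<dots> = \<alpha> i * \<alpha> j * A + (\<alpha> i * \<beta> j + \<beta> i * \<alpha> j) * C + \<beta> i * \<beta> j * B"
      using comb[of j k] comb[of j l] sym[of l k] by (simp add: A_def B_def C_def algebra_simps)
    also have "\<dots> = \<alpha> i * \<alpha> j * (s * s) + (\<alpha> i * \<beta> j + \<beta> i * \<alpha> j) * C
        + \<beta> i * \<beta> j * (C * C / (s * s) + t * t)"
      using s t pos by (simp add: A_def field_simps power2_eq_square)
    also have "\<dots> = a i * a j + b i * b j"
      using s(2) by (simp add: a_def b_def field_simps)
    finally show ?thesis .
  qed
  moreover have "a i \<ge> 0 \<and> b i \<ge> 0" for i
    using coeffs_nonneg[of i] s t nonneg by (simp add: a_def b_def C_def)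
  ultimately show ?thesis by blast
qed

lemma widest_pair_coeff_nonneg:
  fixes M :: "'n \<Rightarrow> 'n \<Rightarrow> real"
  assumes sym: "\<And>i j. M i j = M j i" and nonneg: "\<And>i j. M i j \<ge> 0"
    and pos: "M k k > 0" and minor: "M k k * M l l - (M k l)^2 > 0"
    and comb: "\<And>j. M i j = \<alpha> * M k j + \<beta> * M l j"
    and widest: "M i i > 0 \<Longrightarrow> (M k l)^2 / (M k k * M l l) \<le> (M i k)^2 / (M i i * M k k)"
  shows "\<alpha> \<ge> 0"
proof (rule ccontr)
  assume "\<not> \<alpha> \<ge> 0"
  then have neg: "\<alpha> < 0" by simp
  define A B C where "A = M k k" and "B = M l l" and "C = M k l"
  define x where "x = \<alpha> * A + \<beta> * C"
  have ik: "M i k = x" and il: "M i l = \<alpha> * C + \<beta> * B"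
    using comb[of k] comb[of l] sym[of l k] by (simp_all add: x_def A_def B_def C_def)
  have ii: "M i i = \<alpha> * x + \<beta> * (\<alpha> * C + \<beta> * B)"
    using comb[of i] sym[of k i] sym[of l i] ik il by simp
  have "\<alpha> * A < 0"
    using neg pos by (simp add: A_def mult_neg_pos)
  moreover have "x \<ge> 0"
    using nonneg[of i k] ik by simp
  ultimately have "\<beta> * C > 0"
    unfolding x_def by linarith
  have A_pos: "A > 0"
    using pos by (simp add: A_def)
  have "A * B > 0"
    using minor zero_le_power2[of C] unfolding A_def B_def C_def by linarith
  then have B_pos: "B > 0"
    using A_pos by (simp add: zero_less_mult_iff)
  have "M i i * A = x^2 + \<beta>^2 * (A * B - C^2)"
    unfolding ii x_def by (simp add: algebra_simps power2_eq_square)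
  moreover have "\<beta> \<noteq> 0"
    using \<open>\<beta> * C > 0\<close> by auto
  then have "\<beta>^2 * (A * B - C^2) > 0"
    using minor by (simp add: A_def B_def C_def)
  moreover have "x^2 \<ge> 0" by simp
  ultimately have "M i i * A > 0" by linarith
  then have ii_pos: "M i i > 0"
    using A_pos by (simp add: zero_less_mult_iff)
  have "B * x^2 - C^2 * M i i = \<alpha> * (A * B - C^2) * (\<alpha> * A + 2 * \<beta> * C)"
    unfolding ii x_def by (simp add: algebra_simps power2_eq_square)
  moreover have "\<alpha> * (A * B - C^2) * (\<alpha> * A + 2 * \<beta> * C) < 0"
    using neg minor \<open>x \<ge> 0\<close> \<open>\<beta> * C > 0\<close>
    by (intro mult_neg_pos) (simp_all add: A_def B_def C_def x_def mult_neg_pos)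
  ultimately have "B * x^2 < C^2 * M i i" by linarith
  then have "x^2 / (M i i * A) < C^2 / (A * B)"
    using A_pos B_pos ii_pos by (simp add: divide_simps algebra_simps)
  with widest ii_pos ik show False
    by (simp add: A_def B_def C_def)
qed

lemma gram_rank1_factorization:
  fixes M :: "'n \<Rightarrow> 'n \<Rightarrow> real"
  assumes nonneg: "\<And>i j. M i j \<ge> 0" and rank1: "\<And>i j. (M i j)^2 = M i i * M j j"
  shows "\<exists>a b. (\<forall>i. a i \<ge> 0 \<and> b i \<ge> 0) \<and> (\<forall>i j. M i j = a i * a j + b i * b j)"
proof -
  define a where "a i = sqrt (M i i)" for i
  have "M i j = a i * a j" for i j
  proof -
    have "M i j = sqrt ((M i j)^2)"
      using nonneg[of i j] by simp
    also have "\<dots> = a i * a j"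
      unfolding rank1[of i j] a_def by (rule real_sqrt_mult)
    finally show ?thesis .
  qed
  moreover have "a i \<ge> 0" for i
    using nonneg[of i i] by (simp add: a_def)
  ultimately show ?thesis
    by (intro exI[of _ a] exI[of _ "\<lambda>_. 0"]) simp
qed

lemma degenerate_widest_pair_rank1:
  fixes M :: "'n \<Rightarrow> 'n \<Rightarrow> real"
  assumes nonneg: "\<And>i j. M i j \<ge> 0" and minors: "\<And>i j. (M i j)^2 \<le> M i i * M j j"
    and pos: "M k k > 0" "M l l > 0"
    and widest: "\<And>i j. M i i > 0 \<Longrightarrow> M j j > 0 \<Longrightarrow>
      (M k l)^2 / (M k k * M l l) \<le> (M i j)^2 / (M i i * M j j)"
    and degenerate: "M k k * M l l - (M k l)^2 = 0"
  shows "(M i j)^2 = M i i * M j j"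
proof (cases "M i i > 0 \<and> M j j > 0")
  case True
  have "M k k * M l l \<noteq> 0"
    using pos by simp
  moreover have "(M k l)^2 = M k k * M l l"
    using degenerate by simp
  ultimately have "(M k l)^2 / (M k k * M l l) = 1"
    by simp
  with widest[of i j] True have "M i i * M j j \<le> (M i j)^2"
    by (simp add: le_divide_eq)
  with minors[of i j] show ?thesis
    by linarith
next
  case False
  then have "M i i = 0 \<or> M j j = 0"
    using nonneg[of i i] nonneg[of j j] by linarith
  then show ?thesis
    using minors[of i j] by auto
qed

lemma widest_pair_factorization:
  fixes M :: "'n \<Rightarrow> 'n \<Rightarrow> real"
  assumes sym: "\<And>i j. M i j = M j i" and nonneg: "\<And>i j. M i j \<ge> 0"
    and minors: "\<And>i j. (M i j)^2 \<le> M i i * M j j"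
    and rank2: "\<And>i. M k k * M l l - (M k l)^2 \<noteq> 0 \<Longrightarrow> \<exists>x y. \<forall>j. M i j = x * M k j + y * M l j"
    and pos: "M k k > 0" "M l l > 0"
    and widest: "\<And>i j. M i i > 0 \<Longrightarrow> M j j > 0 \<Longrightarrow>
      (M k l)^2 / (M k k * M l l) \<le> (M i j)^2 / (M i i * M j j)"
  shows "\<exists>a b. (\<forall>i. a i \<ge> 0 \<and> b i \<ge> 0) \<and> (\<forall>i j. M i j = a i * a j + b i * b j)"
proof (cases "M k k * M l l - (M k l)^2 = 0")
  case True
  with nonneg minors pos widest have "(M i j)^2 = M i i * M j j" for i j
    by (rule degenerate_widest_pair_rank1)
  with nonneg show ?thesis
    by (rule gram_rank1_factorization)
next
  case False
  have minor: "M k k * M l l - (M k l)^2 > 0"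
    using False minors[of k l] by simp
  have "\<forall>i. \<exists>x y. \<forall>j. M i j = x * M k j + y * M l j"
    using rank2[OF False] by blast
  then obtain \<alpha> \<beta> where comb: "\<And>i j. M i j = \<alpha> i * M k j + \<beta> i * M l j"
    by metis
  have "\<alpha> i \<ge> 0" for i
    by (rule widest_pair_coeff_nonneg[OF sym nonneg pos(1) minor comb])
      (use widest[of i k] pos(1) in blast)
  moreover have "\<beta> i \<ge> 0" for i
  proof (rule widest_pair_coeff_nonneg[where M = M and k = l and l = k, OF sym nonneg pos(2)])
    show "M l l * M k k - (M l k)^2 > 0"
      using minor sym[of l k] by (simp add: mult.commute)
    show "M i j = \<beta> i * M l j + \<alpha> i * M k j" for j
      using comb[of i j] by simp
    assume "M i i > 0"
    then show "(M l k)^2 / (M l l * M k k) \<le> (M i l)^2 / (M i i * M l l)"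
      using widest[of i l] pos sym[of l k] by (simp add: mult.commute)
  qed
  ultimately show ?thesis
    using rank2_gram_factorization[OF sym pos(1) minor _ comb] nonneg by blast
qed

lemma nonneg_rank2_factorization:
  fixes M :: "'n::finite \<Rightarrow> 'n \<Rightarrow> real"
  assumes sym: "\<And>i j. M i j = M j i" and nonneg: "\<And>i j. M i j \<ge> 0"
    and minors: "\<And>i j. (M i j)^2 \<le> M i i * M j j"
    and rank2: "\<And>k l i. M k k * M l l - (M k l)^2 \<noteq> 0 \<Longrightarrow> \<exists>x y. \<forall>j. M i j = x * M k j + y * M l j"
  shows "\<exists>a b. (\<forall>i. a i \<ge> 0 \<and> b i \<ge> 0) \<and> (\<forall>i j. M i j = a i * a j + b i * b j)"
proof (cases "\<exists>i. M i i > 0")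
  case False
  then have "M i i = 0" for i
    using nonneg[of i i] by (meson order_antisym not_less)
  then have "(M i j)^2 = M i i * M j j" for i j
    using minors[of i j] by simp
  with nonneg show ?thesis
    by (rule gram_rank1_factorization)
next
  case True
  define P where "P = {(i, j). M i i > 0 \<and> M j j > 0}"
  define cos2 where "cos2 = (\<lambda>(i, j). (M i j)^2 / (M i i * M j j))"
  from True have "P \<noteq> {}"
    by (auto simp: P_def)
  then obtain q where "q \<in> P" and "cos2 q = Min (cos2 ` P)"
    using Min_in[of "cos2 ` P"] by fastforce
  moreover obtain k l where "q = (k, l)"
    by fastforce
  ultimately have "(k, l) \<in> P" and "\<And>q. q \<in> P \<Longrightarrow> cos2 (k, l) \<le> cos2 q"
    by simp_all
  then show ?thesis
    by (intro widest_pair_factorization[of M k l, OF sym nonneg minors rank2]) (auto simp: P_def cos2_def)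
qed

definition sorted_pair :: "'a::linorder \<times> 'a \<Rightarrow> 'a \<times> 'a" where
  "sorted_pair r = (min (fst r) (snd r), max (fst r) (snd r))"

lemma sorted_pair_eq_iff:
  "sorted_pair (x, y) = sorted_pair (u, v) \<longleftrightarrow> (x = u \<and> y = v) \<or> (x = v \<and> y = u)"
  by (cases "x \<le> y"; cases "u \<le> v") (auto simp: sorted_pair_def min_def max_def)

lemma sorted_pair_eq_self_iff:
  "i \<le> j \<Longrightarrow> sorted_pair (x, y) = (i, j) \<longleftrightarrow> (x = i \<and> y = j) \<or> (x = j \<and> y = i)"
  by (auto simp: sorted_pair_def min_def max_def)

lemma ket_entry: "ket i $ j = (if j = i then 1 else 0)"
  unfolding ket_def axis_def by simp

lemma Dket_entry:
  assumes "i \<le> j"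
  shows "Dket i j $ (x, y) =
    (if sorted_pair (x, y) = (i, j) then complex_of_real (if x = y then 1 else 1 / sqrt 2) else 0)"
proof (cases "i = j")
  case True
  then show ?thesis
    by (auto simp: Dket_def ket_entry sorted_pair_eq_self_iff)
next
  case False
  then have "Dket i j $ (x, y) = (1 / sqrt 2) *\<^sub>R (ket (i, j) $ (x, y) + ket (j, i) $ (x, y))"
    by (simp add: Dket_def)
  then show ?thesis
    using False assms by (auto simp: ket_entry sorted_pair_eq_self_iff scaleR_conv_of_real)
qed

lemma scaleR_matrix_entry: "((a::real) *\<^sub>R (A::complex^'a^'b)) $ r $ c = complex_of_real a * A $ r $ c"
  by (simp only: vector_scaleR_component) (simp add: scaleR_conv_of_real)

lemma ds_state_entry:
  fixes p :: "'n::{finite,linorder} \<Rightarrow> 'n \<Rightarrow> real"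
  assumes sym: "\<And>i j. p j i = p i j"
  shows "ds_state p $ (x, y) $ (u, v) =
    (if sorted_pair (x, y) = sorted_pair (u, v) then complex_of_real (assoc_matrix p $ x $ y) else 0)"
proof -
  define e where
    "e = (if sorted_pair (x, y) = sorted_pair (u, v) then complex_of_real (assoc_matrix p $ x $ y) else 0)"
  have entry: "(p i j *\<^sub>R proj (Dket i j)) $ (x, y) $ (u, v) = (if (i, j) = sorted_pair (x, y) then e else 0)"
    if "i \<le> j" for i j
  proof -
    have entry_ij: "(p i j *\<^sub>R proj (Dket i j)) $ (x, y) $ (u, v)
        = of_real (p i j) * (Dket i j $ (x, y) * cnj (Dket i j $ (u, v)))"
      by (simp only: scaleR_matrix_entry proj_def vec_lambda_beta)
    show ?thesis
    proof (cases "(i, j) = sorted_pair (x, y) \<and> (i, j) = sorted_pair (u, v)")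
      case True
      then have "x = y \<longleftrightarrow> u = v" "p i j = p x y"
        using sym[of x y] by (auto simp: sorted_pair_def min_def max_def split: if_splits)
      moreover have "complex_of_real (1 / sqrt 2) * complex_of_real (1 / sqrt 2) = 1 / 2"
        by (simp flip: of_real_mult)
      ultimately show ?thesis
        unfolding entry_ij using True that by (auto simp: Dket_entry e_def assoc_matrix_def)
    next
      case False
      then show ?thesis
        unfolding entry_ij using that by (auto simp: Dket_entry e_def)
    qed
  qed
  have "ds_state p $ (x, y) $ (u, v) = (\<Sum>q\<in>{(i, j). i \<le> j}. if q = sorted_pair (x, y) then e else 0)"
    unfolding ds_state_def sum_component
  proof (rule sum.cong[OF refl])
    fix q :: "'n \<times> 'n"
    assume "q \<in> {(i, j). i \<le> j}"
    then obtain i j where q: "q = (i, j)" and "i \<le> j"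
      by blast
    show "(case q of (i, j) \<Rightarrow> p i j *\<^sub>R proj (Dket i j)) $ (x, y) $ (u, v)
        = (if q = sorted_pair (x, y) then e else 0)"
      unfolding q prod.case using \<open>i \<le> j\<close> by (rule entry)
  qed
  also have "\<dots> = e"
    by (simp add: sorted_pair_def min_le_iff_disj)
  finally show ?thesis
    by (simp add: e_def)
qed

lemma sum_diagonal_pairs:
  fixes g :: "'n::finite \<times> 'n \<Rightarrow> 'b::comm_monoid_add"
  assumes "\<And>a b. a \<noteq> b \<Longrightarrow> g (a,b) = 0"
  shows "(\<Sum>r\<in>UNIV. g r) = (\<Sum>a\<in>UNIV. g (a,a))"
proof -
  have "(\<Sum>r\<in>UNIV. g r) = (\<Sum>r\<in>range (\<lambda>a. (a,a)). g r)"
    by (rule sum.mono_neutral_right) (auto, metis assms rangeI)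
  also have "\<dots> = (\<Sum>a\<in>UNIV. g (a,a))"
    by (subst sum.reindex) (auto simp: inj_on_def)
  finally show ?thesis .
qed

lemma assoc_matrix_quadratic_form_nonneg:
  fixes p :: "'n::{finite,linorder} \<Rightarrow> 'n \<Rightarrow> real"
  assumes sym: "\<And>i j. p j i = p i j" and ppt: "PPT (ds_state p)"
  shows "0 \<le> (\<Sum>a\<in>UNIV. \<Sum>b\<in>UNIV. x a * assoc_matrix p $ a $ b * x b)"
proof -
  define X :: "complex^('n \<times> 'n)" where "X = (\<chi> r. if fst r = snd r then complex_of_real (x (fst r)) else 0)"
  define P where "P = ptransB (ds_state p)"
  have P: "P $ (a, a) $ (b, b) = complex_of_real (assoc_matrix p $ a $ b)" for a b
    unfolding P_def ptransB_def by (simp add: ds_state_entry[OF sym] sorted_pair_eq_iff)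
  have "(\<Sum>r\<in>UNIV. \<Sum>c\<in>UNIV. cnj (X $ r) * P $ r $ c * X $ c)
      = (\<Sum>a\<in>UNIV. \<Sum>c\<in>UNIV. cnj (X $ (a, a)) * P $ (a, a) $ c * X $ c)"
    by (rule sum_diagonal_pairs) (simp add: X_def)
  also have "\<dots> = (\<Sum>a\<in>UNIV. \<Sum>b\<in>UNIV. cnj (X $ (a, a)) * P $ (a, a) $ (b, b) * X $ (b, b))"
    by (rule sum.cong[OF refl], rule sum_diagonal_pairs) (simp add: X_def)
  also have "\<dots> = complex_of_real (\<Sum>a\<in>UNIV. \<Sum>b\<in>UNIV. x a * assoc_matrix p $ a $ b * x b)"
    by (simp add: X_def P)
  finally have "(\<Sum>r\<in>UNIV. \<Sum>c\<in>UNIV. cnj (X $ r) * P $ r $ c * X $ c)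
      = complex_of_real (\<Sum>a\<in>UNIV. \<Sum>b\<in>UNIV. x a * assoc_matrix p $ a $ b * x b)" .
  moreover have "0 \<le> Re (\<Sum>r\<in>UNIV. \<Sum>c\<in>UNIV. cnj (X $ r) * P $ r $ c * X $ c)"
    using ppt unfolding PPT_def psd_def P_def by blast
  ultimately show ?thesis
    by simp
qed

lemma quadratic_form_nonneg_imp_det_nonneg:
  fixes A B C :: real
  assumes form: "\<And>s t. 0 \<le> s^2 * A + 2 * s * t * C + t^2 * B" and "B \<ge> 0" and "C \<ge> 0"
  shows "C^2 \<le> A * B"
proof (cases "B = 0")
  case False
  then have "B > 0"
    using \<open>B \<ge> 0\<close> by simp
  have "0 \<le> B^2 * A + 2 * B * (- C) * C + (- C)^2 * B"
    by (rule form)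
  also have "\<dots> = B * (A * B - C^2)"
    by (simp add: algebra_simps power2_eq_square)
  finally show ?thesis
    using \<open>B > 0\<close> by (simp add: zero_le_mult_iff)
next
  case True
  show ?thesis
  proof (cases "C = 0")
    case False
    then have "C > 0"
      using \<open>C \<ge> 0\<close> by simp
    have "0 \<le> 1^2 * A + 2 * 1 * (- (A + 1) / (2 * C)) * C + (- (A + 1) / (2 * C))^2 * B"
      by (rule form)
    also have "\<dots> = -1"
      using True \<open>C > 0\<close> by (simp add: field_simps)
    finally show ?thesis
      by simp
  qed (simp add: True)
qed

lemma assoc_matrix_minor_nonneg:
  fixes p :: "'n::{finite,linorder} \<Rightarrow> 'n \<Rightarrow> real"
  assumes sym: "\<And>i j. p j i = p i j" and nonneg: "\<And>i j. 0 \<le> p i j" and ppt: "PPT (ds_state p)"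
  shows "(assoc_matrix p $ i $ j)^2 \<le> assoc_matrix p $ i $ i * assoc_matrix p $ j $ j"
proof (cases "i = j")
  case True
  then show ?thesis
    by (simp add: power2_eq_square)
next
  case False
  define M where "M a b = assoc_matrix p $ a $ b" for a b
  have "M j i = M i j"
    using sym by (simp add: M_def assoc_matrix_def)
  have "0 \<le> s^2 * M i i + 2 * s * t * M i j + t^2 * M j j" for s t
  proof -
    define x where "x a = (if a = i then s else 0) + (if a = j then t else 0)" for a
    have inner: "(\<Sum>b\<in>UNIV. x a * M a b * x b) = x a * (s * M a i + t * M a j)" for a
      by (simp add: x_def algebra_simps sum.distrib sum_distrib_left if_distrib if_distribR sum.If_cases)
    have "(\<Sum>a\<in>UNIV. \<Sum>b\<in>UNIV. x a * M a b * x b) = s^2 * M i i + 2 * s * t * M i j + t^2 * M j j"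
      unfolding inner using False \<open>M j i = M i j\<close>
      by (simp add: x_def algebra_simps sum.distrib sum_distrib_left if_distrib if_distribR
          sum.If_cases power2_eq_square)
    with assoc_matrix_quadratic_form_nonneg[OF sym ppt, of x] show ?thesis
      by (simp add: M_def)
  qed
  moreover have "M j j \<ge> 0" "M i j \<ge> 0"
    using nonneg by (auto simp: M_def assoc_matrix_def)
  ultimately show ?thesis
    unfolding M_def by (rule quadratic_form_nonneg_imp_det_nonneg)
qed

lemma sum_assoc_matrix:
  fixes p :: "'n::{finite,linorder} \<Rightarrow> 'n \<Rightarrow> real"
  assumes sym: "\<And>i j. p j i = p i j"
  shows "(\<Sum>x\<in>UNIV. \<Sum>y\<in>UNIV. assoc_matrix p $ x $ y) = (\<Sum>(i,j) \<in> {(i,j). i \<le> j}. p i j)"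
proof -
  define f where "f r = assoc_matrix p $ fst r $ snd r" for r
  define S where "S = {(i,j). (i::'n) \<le> j}"
  define T where "T = {(i,j). (j::'n) < i}"
  have fs: "f (prod.swap r) = f r" for r using sym by (simp add: f_def assoc_matrix_def)
  have "(\<Sum>x\<in>UNIV. \<Sum>y\<in>UNIV. assoc_matrix p $ x $ y) = (\<Sum>r\<in>UNIV. f r)"
    by (simp add: f_def sum.cartesian_product case_prod_beta')
  also have "UNIV = S \<union> T" by (auto simp: S_def T_def)
  also have "sum f (S \<union> T) = sum f S + sum f T"
    by (rule sum.union_disjoint) (auto simp: S_def T_def)
  also have "T = prod.swap ` {r \<in> S. fst r \<noteq> snd r}"
    by (auto simp: S_def T_def image_iff)
  also have "sum f \<dots> = sum (f \<circ> prod.swap) {r \<in> S. fst r \<noteq> snd r}"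
    by (rule sum.reindex) (simp add: inj_on_def)
  also have "\<dots> = (\<Sum>r\<in>S. if fst r \<noteq> snd r then f r else 0)"
    by (simp add: fs sum.inter_filter)
  also have "sum f S + \<dots> = (\<Sum>r\<in>S. f r + (if fst r \<noteq> snd r then f r else 0))"
    by (simp add: sum.distrib)
  also have "\<dots> = (\<Sum>(i,j)\<in>S. p i j)"
    by (rule sum.cong) (auto simp: f_def assoc_matrix_def)
  finally show ?thesis by (simp add: S_def)
qed

lemma sum_roots_of_unity:
  fixes m :: int and N :: nat
  assumes N: "N > 0" and m: "\<bar>m\<bar> < int N"
  shows "(\<Sum>t<N. cis (2 * pi * real t * of_int m / real N)) = (if m = 0 then of_nat N else 0)"
proof (cases "m = 0")
  case False
  define z where "z = cis (2 * pi * of_int m / real N)"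
  have powers: "cis (2 * pi * real t * of_int m / real N) = z ^ t" for t
    unfolding z_def Complex.DeMoivre by (simp add: algebra_simps)
  have "z \<noteq> 1"
  proof
    assume "z = 1"
    then have "cos (2 * pi * of_int m / real N) = 1"
      unfolding z_def by (metis cis.sel(1) one_complex.sel(1))
    then obtain n :: int where "2 * pi * of_int m / real N = of_int n * 2 * pi"
      by (auto simp: cos_one_2pi_int)
    then have "m = int N * n"
      using N by (simp add: field_simps) (metis of_int_eq_iff of_int_mult of_int_of_nat_eq)
    moreover from this False have "n \<noteq> 0"
      by auto
    then have "int N * 1 \<le> int N * \<bar>n\<bar>"
      by (intro mult_left_mono) simp_all
    ultimately show False
      using m by (simp add: abs_mult)
  qed
  moreover have "z ^ N = 1"
    unfolding z_def Complex.DeMoivre using N by (simp add: cis_multiple_2pi)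
  ultimately show ?thesis
    unfolding powers using False by (simp add: geometric_sum)
qed simp

lemma one_plus_power3_eq_sum_imp:
  assumes "1 + 3^b = (3::nat)^c + 3^d"
  shows "(c = 0 \<and> b = d) \<or> (d = 0 \<and> b = c)"
proof -
  have mod3: "(3::nat)^k mod 3 = (if k = 0 then 1 else 0)" for k
    by (cases k) auto
  have "c = 0 \<or> d = 0"
  proof (rule ccontr)
    assume "\<not> (c = 0 \<or> d = 0)"
    then have "(3^c + 3^d) mod 3 = (0::nat)"
      using mod3 by (simp add: mod_add_eq[symmetric])
    moreover have "(1 + 3^b) mod 3 = (1 mod 3 + 3^b mod 3) mod (3::nat)"
      by (rule mod_add_eq[symmetric])
    then have "(1 + 3^b) mod 3 \<noteq> (0::nat)"
      using mod3[of b] by (cases "b = 0") simp_all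
    ultimately show False
      using assms by simp
  qed
  then show ?thesis
    using assms by auto
qed

lemma power3_sums_eq_imp:
  "(3::nat)^a + 3^b = 3^c + 3^d \<Longrightarrow> (a = c \<and> b = d) \<or> (a = d \<and> b = c)"
proof (induction "a + b + c + d" arbitrary: a b c d rule: less_induct)
  case less
  show ?case
  proof (cases "a = 0 \<or> b = 0 \<or> c = 0 \<or> d = 0")
    case True
    then show ?thesis
    proof (elim disjE)
      assume "a = 0"
      then show ?thesis
        using one_plus_power3_eq_sum_imp[of b c d] less.prems by auto
    next
      assume "b = 0"
      then show ?thesis
        using one_plus_power3_eq_sum_imp[of a c d] less.prems by (auto simp: add.commute)
    next
      assume "c = 0"
      then show ?thesis
        using one_plus_power3_eq_sum_imp[of d a b] less.prems by auto
    next
      assume "d = 0"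
      then show ?thesis
        using one_plus_power3_eq_sum_imp[of c a b] less.prems by (auto simp: add.commute)
    qed
  next
    case False
    then obtain a' b' c' d' where Suc: "a = Suc a'" "b = Suc b'" "c = Suc c'" "d = Suc d'"
      by (metis not0_implies_Suc)
    then have "(3::nat)^a' + 3^b' = 3^c' + 3^d'"
      using less.prems by simp
    with less.hyps[OF _ this] show ?thesis
      using Suc by simp
  qed
qed

lemma exists_sidon_labelling:
  "\<exists>(g :: 'n::{finite,linorder} \<Rightarrow> nat) N. N > 0 \<and>
     (\<forall>x y u v. g x + g y = g u + g v \<longleftrightarrow> sorted_pair (x, y) = sorted_pair (u, v)) \<and>
     (\<forall>x y. g x + g y < N)"
proof -
  define d where "d = CARD('n)"
  obtain e :: "'n \<Rightarrow> nat" where e: "bij_betw e UNIV {..<d}"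
    using ex_bij_betw_finite_nat[of "UNIV :: 'n set"] by (auto simp: d_def atLeast0LessThan)
  define g where "g x = (3::nat) ^ e x" for x
  have "g x + g y = g u + g v \<longleftrightarrow> sorted_pair (x, y) = sorted_pair (u, v)" for x y u v
  proof
    assume "g x + g y = g u + g v"
    then have "(e x = e u \<and> e y = e v) \<or> (e x = e v \<and> e y = e u)"
      unfolding g_def by (rule power3_sums_eq_imp)
    then show "sorted_pair (x, y) = sorted_pair (u, v)"
      using bij_betw_imp_inj_on[OF e] by (auto simp: sorted_pair_eq_iff dest: injD)
  qed (auto simp: sorted_pair_eq_iff)
  moreover have "g x + g y < 3 ^ d" for x y
  proof -
    have "d > 0"
      by (simp add: d_def)
    have "g z \<le> 3 ^ (d - 1)" for z
    proof -
      have "e z < d"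
        using bij_betwE[OF e] by simp
      then show ?thesis
        unfolding g_def by (intro power_increasing) simp_all
    qed
    then have "g x + g y \<le> 2 * 3 ^ (d - 1)"
      by (metis add_mono mult_2)
    also have "\<dots> < 3 ^ d"
      using \<open>d > 0\<close> by (cases d) simp_all
    finally show ?thesis .
  qed
  ultimately show ?thesis
    by (intro exI[of _ g] exI[of _ "3 ^ d"]) auto
qed

lemma psd_scaleR_proj:
  assumes "c \<ge> 0"
  shows "psd (c *\<^sub>R proj (v::complex^'a))"
  unfolding psd_def
proof
  fix x :: "complex^'a"
  define z where "z = (\<Sum>i\<in>UNIV. cnj (x $ i) * v $ i)"
  have "(\<Sum>i\<in>UNIV. \<Sum>j\<in>UNIV. cnj (x $ i) * (c *\<^sub>R proj v) $ i $ j * x $ j)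
      = (\<Sum>i\<in>UNIV. \<Sum>j\<in>UNIV. complex_of_real c * ((cnj (x $ i) * v $ i) * (cnj (v $ j) * x $ j)))"
    unfolding scaleR_matrix_entry proj_def vec_lambda_beta by (simp add: algebra_simps)
  also have "\<dots> = complex_of_real c * ((\<Sum>i\<in>UNIV. cnj (x $ i) * v $ i) * (\<Sum>j\<in>UNIV. cnj (v $ j) * x $ j))"
    unfolding sum_product by (simp add: sum_distrib_left)
  also have "\<dots> = complex_of_real c * (z * cnj z)"
    by (simp add: z_def mult.commute)
  also have "\<dots> = complex_of_real (c * (norm z)^2)"
    by (simp flip: complex_norm_square)
  finally show "(\<Sum>i\<in>UNIV. \<Sum>j\<in>UNIV. cnj (x $ i) * (c *\<^sub>R proj v) $ i $ j * x $ j) \<in> \<real> \<and>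
        0 \<le> Re (\<Sum>i\<in>UNIV. \<Sum>j\<in>UNIV. cnj (x $ i) * (c *\<^sub>R proj v) $ i $ j * x $ j)"
    using assms by simp
qed

lemma mtrace_scaleR_proj:
  "mtrace (c *\<^sub>R proj (v::complex^'a)) = complex_of_real (c * (\<Sum>i\<in>UNIV. (norm (v $ i))^2))"
  unfolding mtrace_def scaleR_matrix_entry
  by (simp add: proj_def complex_norm_square[symmetric] sum_distrib_left)

lemma kron_scaleR: "kron (a *\<^sub>R A) (b *\<^sub>R B) = (a * b) *\<^sub>R kron A B"
  by (simp add: vec_eq_iff kron_def scaleR_matrix_entry)

definition product_mixture ::
    "complex^('a::finite \<times> 'b::finite)^('a \<times> 'b) \<Rightarrow> real \<Rightarrow> bool" where
  "product_mixture R t \<longleftrightarrow>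
    (\<exists>(m::nat) (w::nat \<Rightarrow> real) (A::nat \<Rightarrow> complex^'a^'a) (B::nat \<Rightarrow> complex^'b^'b).
     (\<forall>k<m. 0 \<le> w k \<and> density (A k) \<and> density (B k)) \<and> (\<Sum>k<m. w k) = t \<and>
     R = (\<Sum>k<m. w k *\<^sub>R kron (A k) (B k)))"

lemma separable_iff_product_mixture: "separable R \<longleftrightarrow> product_mixture R 1"
  unfolding separable_def product_mixture_def ..

lemma product_mixture_zero: "product_mixture 0 0"
  unfolding product_mixture_def by (intro exI[of _ 0]) simp

lemma sum_lessThan_add: "(\<Sum>k<m + n. f k) = (\<Sum>k<m. f k) + (\<Sum>k<n. f (k + m))"
  for f :: "nat \<Rightarrow> 'a::comm_monoid_add"
  by (induction n) (simp_all add: ac_simps)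

lemma product_mixture_add:
  assumes "product_mixture R s" and "product_mixture S t"
  shows "product_mixture (R + S) (s + t)"
proof -
  obtain m :: nat and w A B
    where R: "\<forall>k<m. 0 \<le> w k \<and> density (A k) \<and> density (B k)" "(\<Sum>k<m. w k) = s"
      "R = (\<Sum>k<m. w k *\<^sub>R kron (A k) (B k))"
    using assms(1) unfolding product_mixture_def by (elim exE conjE) iprover
  obtain n :: nat and w' A' B'
    where S: "\<forall>k<n. 0 \<le> w' k \<and> density (A' k) \<and> density (B' k)" "(\<Sum>k<n. w' k) = t"
      "S = (\<Sum>k<n. w' k *\<^sub>R kron (A' k) (B' k))"
    using assms(2) unfolding product_mixture_def by (elim exE conjE) iprover
  show ?thesis
    unfolding product_mixture_def
  proof (intro exI conjI)
    show "\<forall>k<m + n. 0 \<le> (if k < m then w k else w' (k - m)) \<and>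
        density (if k < m then A k else A' (k - m)) \<and> density (if k < m then B k else B' (k - m))"
      using R(1) S(1) by auto
    show "(\<Sum>k<m + n. if k < m then w k else w' (k - m)) = s + t"
      using R(2) S(2) by (simp add: sum_lessThan_add)
    show "R + S = (\<Sum>k<m + n. (if k < m then w k else w' (k - m)) *\<^sub>R
        kron (if k < m then A k else A' (k - m)) (if k < m then B k else B' (k - m)))"
      using R(3) S(3) by (simp add: sum_lessThan_add)
  qed
qed

(* The diagonal symmetric operator whose associated matrix is w w^T. *)
definition ds_rank_one ::
    "('n::{finite,linorder} \<Rightarrow> real) \<Rightarrow> complex^('n \<times> 'n)^('n \<times> 'n)" where
  "ds_rank_one w =
    (\<chi> r c. if sorted_pair r = sorted_pair c then complex_of_real (w (fst r) * w (snd r)) else 0)"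

definition phase_vector ::
    "('n::finite \<Rightarrow> real) \<Rightarrow> ('n \<Rightarrow> nat) \<Rightarrow> nat \<Rightarrow> nat \<Rightarrow> complex^'n" where
  "phase_vector w g N t =
    (\<chi> i. complex_of_real (sqrt (w i)) * cis (2 * pi * real t * real (g i) / real N))"

lemma kron_proj_phase_vector_entry:
  assumes "N > 0"
  shows "kron (proj (phase_vector w g N t)) (proj (phase_vector w g N t)) $ (x, y) $ (u, v)
    = complex_of_real (sqrt (w x) * sqrt (w y) * sqrt (w u) * sqrt (w v))
      * cis (2 * pi * real t * of_int (int (g x + g y) - int (g u + g v)) / real N)"
proof -
  define \<theta> where "\<theta> i = 2 * pi * real t * real (g i) / real N" for i
  have "kron (proj (phase_vector w g N t)) (proj (phase_vector w g N t)) $ (x, y) $ (u, v)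
    = complex_of_real (sqrt (w x) * sqrt (w y) * sqrt (w u) * sqrt (w v))
      * (cis (\<theta> x) * cis (- \<theta> u) * (cis (\<theta> y) * cis (- \<theta> v)))"
    by (simp add: kron_def proj_def phase_vector_def \<theta>_def cis_cnj algebra_simps)
  also have "cis (\<theta> x) * cis (- \<theta> u) * (cis (\<theta> y) * cis (- \<theta> v))
      = cis (\<theta> x - \<theta> u + (\<theta> y - \<theta> v))"
    by (simp add: cis_mult)
  also have "\<theta> x - \<theta> u + (\<theta> y - \<theta> v)
      = 2 * pi * real t * of_int (int (g x + g y) - int (g u + g v)) / real N"
    using assms by (simp add: \<theta>_def field_simps)
  finally show ?thesis .
qed

(* The t-average of the phase of the (x, y), (u, v) entry vanishes unless g x + g y = g u + g v. *)
lemma sum_kron_proj_phase_vector: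
  fixes w :: "'n::{finite,linorder} \<Rightarrow> real"
  assumes nonneg: "\<And>i. w i \<ge> 0" and N: "N > 0"
    and sidon: "\<And>x y u v. g x + g y = g u + g v \<longleftrightarrow> sorted_pair (x, y) = sorted_pair (u, v)"
    and bound: "\<And>x y. g x + g y < N"
  shows "(\<Sum>t<N. kron (proj (phase_vector w g N t)) (proj (phase_vector w g N t)))
    = real N *\<^sub>R ds_rank_one w"
proof -
  have "(\<Sum>t<N. kron (proj (phase_vector w g N t)) (proj (phase_vector w g N t))) $ (x, y) $ (u, v)
      = (real N *\<^sub>R ds_rank_one w) $ (x, y) $ (u, v)" for x y u v
  proof -
    define m where "m = int (g x + g y) - int (g u + g v)"
    define s where "s = sqrt (w x) * sqrt (w y) * sqrt (w u) * sqrt (w v)"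
    have "\<bar>m\<bar> < int N"
      using bound[of x y] bound[of u v] by (simp add: m_def)
    have "(\<Sum>t<N. kron (proj (phase_vector w g N t)) (proj (phase_vector w g N t))) $ (x, y) $ (u, v)
        = complex_of_real s * (\<Sum>t<N. cis (2 * pi * real t * of_int m / real N))"
      unfolding sum_component kron_proj_phase_vector_entry[OF N] m_def s_def
      by (rule sum_distrib_left[symmetric])
    also have "\<dots> = complex_of_real s * (if m = 0 then of_nat N else 0)"
      using N \<open>\<bar>m\<bar> < int N\<close> by (simp add: sum_roots_of_unity)
    also have "\<dots> = (real N *\<^sub>R ds_rank_one w) $ (x, y) $ (u, v)"
    proof (cases "m = 0")
      case True
      then have "g x + g y = g u + g v"
        by (simp add: m_def)
      then have "sorted_pair (x, y) = sorted_pair (u, v)"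
        using sidon by blast
      moreover have "sqrt (w z) * sqrt (w z) = w z" for z
        using nonneg[of z] by simp
      ultimately have "s = w x * w y"
        unfolding s_def sorted_pair_eq_iff by (metis mult.commute mult.left_commute)
      with True show ?thesis
        using \<open>sorted_pair (x, y) = sorted_pair (u, v)\<close>
        by (simp add: ds_rank_one_def mult_ac) (simp add: scaleR_conv_of_real)
    next
      case False
      then have "g x + g y \<noteq> g u + g v"
        by (simp add: m_def)
      then have "sorted_pair (x, y) \<noteq> sorted_pair (u, v)"
        using sidon by blast
      with False show ?thesis
        by (simp add: ds_rank_one_def)
    qed
    finally show ?thesis .
  qed
  then show ?thesis
    by (simp add: vec_eq_iff)
qed

lemma ds_rank_one_product_mixture:
  fixes w :: "'n::{finite,linorder} \<Rightarrow> real" and g :: "'n \<Rightarrow> nat" and N :: nat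
  assumes nonneg: "\<And>i. w i \<ge> 0" and N: "N > 0"
    and sidon: "\<And>x y u v. g x + g y = g u + g v \<longleftrightarrow> sorted_pair (x, y) = sorted_pair (u, v)"
    and bound: "\<And>x y. g x + g y < N"
  shows "product_mixture (ds_rank_one w) ((\<Sum>i\<in>UNIV. w i)^2)"
proof (cases "(\<Sum>i\<in>UNIV. w i) = 0")
  case True
  then have "ds_rank_one w = 0"
    using nonneg by (simp add: sum_nonneg_eq_0_iff ds_rank_one_def vec_eq_iff)
  with True show ?thesis
    by (simp add: product_mixture_zero)
next
  case False
  define W where "W = (\<Sum>i\<in>UNIV. w i)"
  have "W > 0"
    using False nonneg by (simp add: W_def sum_nonneg order_less_le)
  define A where "A t = (1 / W) *\<^sub>R proj (phase_vector w g N t)" for t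
  have "density (A t)" for t
  proof -
    have "(norm (phase_vector w g N t $ i))^2 = w i" for i
      using nonneg[of i] by (simp add: phase_vector_def norm_mult)
    then have "mtrace (A t) = 1"
      using \<open>W > 0\<close> by (simp add: A_def mtrace_scaleR_proj W_def)
    then show ?thesis
      using psd_scaleR_proj[of "1 / W"] \<open>W > 0\<close> by (simp add: density_def A_def)
  qed
  moreover have "(\<Sum>t<N. (W^2 / N) *\<^sub>R kron (A t) (A t)) = ds_rank_one w"
  proof -
    have "(\<Sum>t<N. (W^2 / N) *\<^sub>R kron (A t) (A t))
        = (1 / N) *\<^sub>R (\<Sum>t<N. kron (proj (phase_vector w g N t)) (proj (phase_vector w g N t)))"
      using \<open>W > 0\<close> by (simp add: A_def kron_scaleR scaleR_sum_right power2_eq_square)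
    also have "\<dots> = ds_rank_one w"
      using N by (simp add: sum_kron_proj_phase_vector[OF nonneg N sidon bound])
    finally show ?thesis .
  qed
  moreover have "(\<Sum>t<N. W^2 / N) = W^2"
    using N by simp
  ultimately show ?thesis
    unfolding product_mixture_def W_def[symmetric]
    by (intro exI[of _ N] exI[of _ "\<lambda>_. W^2 / N"] exI[of _ A]) auto
qed

lemma assoc_matrix_factorization:
  fixes p :: "'n::{finite,linorder} \<Rightarrow> 'n \<Rightarrow> real"
  assumes sym: "\<And>i j. p j i = p i j" and nonneg: "\<And>i j. 0 \<le> p i j"
    and ppt: "PPT (ds_state p)" and rank: "rank (assoc_matrix p) \<le> 2"
  obtains a b where "\<And>i. a i \<ge> 0 \<and> b i \<ge> 0"
    and "\<And>i j. assoc_matrix p $ i $ j = a i * a j + b i * b j"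
proof -
  define M where "M = assoc_matrix p"
  have "\<exists>x y. \<forall>j. M $ i $ j = x * M $ k $ j + y * M $ l $ j"
    if minor: "M $ k $ k * M $ l $ l - (M $ k $ l)^2 \<noteq> 0" for k l i
  proof -
    have "M $ l $ k = M $ k $ l"
      using sym by (simp add: M_def assoc_matrix_def)
    with minor have indep: "u *\<^sub>R M $ k + v *\<^sub>R M $ l = 0 \<Longrightarrow> u = 0 \<and> v = 0" for u v
      by (intro row_pair_independent_if_minor_nonzero) (simp_all add: power2_eq_square)
    obtain x y where "M $ i = x *\<^sub>R M $ k + y *\<^sub>R M $ l"
      using rank_le_2_row_combination[of M k l i, OF _ indep] rank by (auto simp: M_def)
    then show ?thesis
      by (auto simp: vec_eq_iff)
  qed
  moreover have "M $ i $ j = M $ j $ i" "M $ i $ j \<ge> 0" for i j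
    using sym nonneg by (simp_all add: M_def assoc_matrix_def)
  moreover have "(M $ i $ j)^2 \<le> M $ i $ i * M $ j $ j" for i j
    unfolding M_def using sym nonneg ppt by (rule assoc_matrix_minor_nonneg)
  ultimately have "\<exists>a b. (\<forall>i. a i \<ge> 0 \<and> b i \<ge> 0) \<and> (\<forall>i j. M $ i $ j = a i * a j + b i * b j)"
    by (intro nonneg_rank2_factorization)
  then show ?thesis
    using that unfolding M_def by blast
qed

lemma ds_state_eq_ds_rank_one_add:
  fixes p :: "'n::{finite,linorder} \<Rightarrow> 'n \<Rightarrow> real"
  assumes sym: "\<And>i j. p j i = p i j"
    and factor: "\<And>i j. assoc_matrix p $ i $ j = a i * a j + b i * b j"
  shows "ds_state p = ds_rank_one a + ds_rank_one b"
  by (simp add: vec_eq_iff ds_state_entry[OF sym] factor ds_rank_one_def)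

theorem theorem4:
  fixes p :: "'n::{finite,linorder} \<Rightarrow> 'n \<Rightarrow> real"
  assumes "CARD('n) \<ge> 2"
    and "\<And>i j. p j i = p i j"
    and "\<And>i j. 0 \<le> p i j"
    and "(\<Sum>(i,j) \<in> {(i,j). i \<le> j}. p i j) = 1"
    and "PPT (ds_state p)"
    and "rank (assoc_matrix p) \<le> 2"
  shows "separable (ds_state p)"
proof -
  note sym = assms(2)
  obtain a b where nonneg: "\<And>i. a i \<ge> 0 \<and> b i \<ge> 0"
    and factor: "\<And>i j. assoc_matrix p $ i $ j = a i * a j + b i * b j"
    using assoc_matrix_factorization[OF sym assms(3,5,6)] by blast
  obtain g :: "'n \<Rightarrow> nat" and N where "N > 0"
    and sidon: "\<And>x y u v. g x + g y = g u + g v \<longleftrightarrow> sorted_pair (x, y) = sorted_pair (u, v)"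
    and bound: "\<And>x y. g x + g y < N"
    using exists_sidon_labelling by blast
  have "(\<Sum>i\<in>UNIV. a i)^2 + (\<Sum>i\<in>UNIV. b i)^2 = 1"
    using sum_assoc_matrix[of p, OF sym] assms(4)
    by (simp add: factor power2_eq_square sum_product sum.distrib)
  moreover have "product_mixture (ds_rank_one a) ((\<Sum>i\<in>UNIV. a i)^2)"
    and "product_mixture (ds_rank_one b) ((\<Sum>i\<in>UNIV. b i)^2)"
    using nonneg \<open>N > 0\<close> sidon bound by (blast intro: ds_rank_one_product_mixture)+
  ultimately show ?thesis
    unfolding separable_iff_product_mixture ds_state_eq_ds_rank_one_add[OF sym factor]
    by (metis product_mixture_add)
qed

end
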